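(* There exists a probability density $f$ supported on $[0,\infty)$ such that $f\in\mathcal{L}_0\setminus\mathcal{S}_0$ and $f$ is not almost decreasing.
   Context: For a probability density $f$ on $[0,\infty)$: $f\in\mathcal{L}_0$ (long-tailed density) if $f(x)>0$ for all sufficiently large $x$ and for every constant $t\in\mathbb{R}$, $f(x+t)\sim f(x)$ as $x\to\infty$ (where $a(x)\sim b(x)$ means $a(x)/b(x)\to1$). $f\in\mathcal{S}_0$ (subexponential density) if $f\in\mathcal{L}_0$ and $\int_0^x f(x-y)f(y)\,dy\sim 2f(x)$ as $x\to\infty$. The density $f$ is called almost decreasing if there exists a constant $x_0\ge 0$ such that $f(x)>0$ for all $x\ge x_0$ and $\sup_{x_0\le x\le y<\infty} f(y)/f(x)<\infty$. *)

theory Defs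
  imports "HOL-Analysis.Analysis"
begin

definition prob_density_nonneg :: "(real \<Rightarrow> real) \<Rightarrow> bool" where
  "prob_density_nonneg f \<longleftrightarrow>
     f \<in> borel_measurable lborel \<and> (\<forall>x. 0 \<le> f x) \<and> (\<forall>x<0. f x = 0) \<and>
     integrable lborel f \<and> integral\<^sup>L lborel f = 1"

definition long_tailed_density :: "(real \<Rightarrow> real) \<Rightarrow> bool" where
  "long_tailed_density f \<longleftrightarrow>
     (\<forall>\<^sub>F x in at_top. f x > 0) \<and>
     (\<forall>t::real. ((\<lambda>x. f (x + t) / f x) \<longlongrightarrow> 1) at_top)"

definition subexp_density :: "(real \<Rightarrow> real) \<Rightarrow> bool" where
  "subexp_density f \<longleftrightarrow>
     long_tailed_density f \<and>
     ((\<lambda>x. (LINT y:{0..x}|lborel. f (x - y) * f y) / (2 * f x)) \<longlongrightarrow> 1) at_top"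

definition almost_decreasing :: "(real \<Rightarrow> real) \<Rightarrow> bool" where
  "almost_decreasing f \<longleftrightarrow>
     (\<exists>x0\<ge>0. (\<forall>x\<ge>x0. f x > 0) \<and>
        (\<exists>C. \<forall>x y. x0 \<le> x \<longrightarrow> x \<le> y \<longrightarrow> f y / f x \<le> C))"

end

(*
  Take f proportional to exp (- h x) on [1, \<infinity>) with h x = sqrt x * (2 + sin (pi * log 2 x)).
  The sine oscillates only on a logarithmic scale, so h y - h x = O((y - x) / sqrt x)
  and f is long-tailed.  At p = 2 powr (2k + 1/2) the sine
  equals 1, at p/2 and 2p it equals -1.  Hence f (2p) / f p = exp (3 sqrt p - sqrt (2p)) is
  unbounded, so f is not almost decreasing; and the convolution f * f at p, already on
  [p/2 - 1, p/2], is at least of order exp (- 2 sqrt (p/2)), which swamps f p ~ exp (- 3 sqrt p),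
  so f is not subexponential.
*)
theory Submission
  imports Defs "HOL-Real_Asymp.Real_Asymp"
begin

lemma long_tailed_densityI_exp:
  fixes f h :: "real \<Rightarrow> real"
  assumes "c > 0" and f: "\<forall>\<^sub>F x in at_top. f x = c * exp (- h x)"
    and h: "\<And>t. ((\<lambda>x. h (x + t) - h x) \<longlongrightarrow> 0) at_top"
  shows "long_tailed_density f"
  unfolding long_tailed_density_def
proof (intro conjI allI)
  show "\<forall>\<^sub>F x in at_top. f x > 0"
    using f by eventually_elim (use \<open>c > 0\<close> in simp)
  fix t :: real
  have "filterlim (\<lambda>x. x + t) at_top at_top"
    by real_asymp
  with f have "\<forall>\<^sub>F x in at_top. f (x + t) = c * exp (- h (x + t))"
    by (rule eventually_compose_filterlim)
  with f have "\<forall>\<^sub>F x in at_top. exp (- (h (x + t) - h x)) = f (x + t) / f x"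
    by eventually_elim (use \<open>c > 0\<close> in \<open>simp add: exp_diff[symmetric]\<close>)
  moreover have "((\<lambda>x. exp (- (h (x + t) - h x))) \<longlongrightarrow> exp (- 0)) at_top"
    by (intro tendsto_intros h)
  ultimately show "((\<lambda>x. f (x + t) / f x) \<longlongrightarrow> 1) at_top"
    by (simp add: tendsto_cong)
qed

lemma shift_difference_tendsto_zero:
  fixes h e :: "real \<Rightarrow> real"
  assumes h: "\<And>x y. X \<le> x \<Longrightarrow> x \<le> y \<Longrightarrow> \<bar>h y - h x\<bar> \<le> (y - x) * e x"
    and e: "(e \<longlongrightarrow> 0) at_top"
  shows "((\<lambda>x. h (x + t) - h x) \<longlongrightarrow> 0) at_top"
proof (cases "t \<ge> 0")
  case True
  have "\<forall>\<^sub>F x in at_top. norm (h (x + t) - h x) \<le> t * e x"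
    using eventually_ge_at_top[of X]
  proof eventually_elim
    case (elim x)
    then show ?case using h[of x "x + t"] True by simp
  qed
  moreover have "((\<lambda>x. t * e x) \<longlongrightarrow> 0) at_top"
    using tendsto_mult_right_zero[OF e] .
  ultimately show ?thesis by (rule Lim_null_comparison)
next
  case False
  have "\<forall>\<^sub>F x in at_top. norm (h (x + t) - h x) \<le> (- t) * e (x + t)"
    using eventually_ge_at_top[of "X - t"]
  proof eventually_elim
    case (elim x)
    then show ?case using h[of "x + t" x] False by (simp add: abs_minus_commute)
  qed
  moreover have "filterlim (\<lambda>x. x + t) at_top at_top"
    by real_asymp
  then have "((\<lambda>x. (- t) * e (x + t)) \<longlongrightarrow> 0) at_top"
    by (intro tendsto_mult_right_zero filterlim_compose[OF e])
  ultimately show ?thesis by (rule Lim_null_comparison)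
qed

lemma not_almost_decreasingI:
  fixes f :: "real \<Rightarrow> real" and x y :: "'a \<Rightarrow> real"
  assumes "F \<noteq> bot" and "filterlim x at_top F" and "\<forall>\<^sub>F k in F. x k \<le> y k"
    and "filterlim (\<lambda>k. f (y k) / f (x k)) at_top F"
  shows "\<not> almost_decreasing f"
proof
  assume "almost_decreasing f"
  then obtain x0 C where C: "\<And>u v. x0 \<le> u \<Longrightarrow> u \<le> v \<Longrightarrow> f v / f u \<le> C"
    unfolding almost_decreasing_def by blast
  have "\<forall>\<^sub>F k in F. x0 \<le> x k"
    using assms(2) by (simp add: filterlim_at_top)
  moreover have "\<forall>\<^sub>F k in F. f (y k) / f (x k) > C"
    using assms(4) by (simp add: filterlim_at_top_dense)
  ultimately have "\<forall>\<^sub>F k in F. False"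
    using assms(3)
    by eventually_elim (use C in fastforce)
  with \<open>F \<noteq> bot\<close> show False by (simp add: eventually_False)
qed

lemma not_subexp_densityI:
  fixes f :: "real \<Rightarrow> real" and x :: "'a \<Rightarrow> real"
  assumes "F \<noteq> bot" and "filterlim x at_top F"
    and "filterlim (\<lambda>k. (LINT y:{0..x k}|lborel. f (x k - y) * f y) / (2 * f (x k))) at_top F"
  shows "\<not> subexp_density f"
proof
  define R where "R u = (LINT y:{0..u}|lborel. f (u - y) * f y) / (2 * f u)" for u
  assume "subexp_density f"
  then have "(R \<longlongrightarrow> 1) at_top"
    unfolding subexp_density_def R_def by simp
  then have "((\<lambda>k. R (x k)) \<longlongrightarrow> 1) F"
    using assms(2) by (rule filterlim_compose)
  with assms(1,3) show False
    unfolding R_def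
    using not_tendsto_and_filterlim_at_infinity filterlim_at_top_imp_at_infinity by blast
qed

lemma convolution_ge_interval:
  fixes f :: "real \<Rightarrow> real"
  assumes f: "f \<in> borel_measurable lborel" "\<And>y. 0 \<le> f y" "\<And>y. f y \<le> B"
    and ab: "a \<le> b" "{a..b} \<subseteq> {0..x}"
    and c: "\<And>y. y \<in> {a..b} \<Longrightarrow> c \<le> f (x - y) * f y"
  shows "c * (b - a) \<le> (LINT y:{0..x}|lborel. f (x - y) * f y)"
proof -
  have "c * (b - a) = integral\<^sup>L lborel (\<lambda>y. indicator {a..b} y * c)"
    using ab by simp
  also have "\<dots> \<le> integral\<^sup>L lborel (\<lambda>y. indicator {0..x} y *\<^sub>R (f (x - y) * f y))"
  proof (rule integral_mono)
    show "integrable lborel (\<lambda>y. indicator {a..b} y * c)"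
      by (intro integrable_mult_left integrable_real_indicator) (simp_all add: emeasure_lborel_Icc_eq)
    have "integrable lborel (\<lambda>y. indicator {0..x} y * (B * B))"
      by (intro integrable_mult_left integrable_real_indicator) (simp_all add: emeasure_lborel_Icc_eq)
    then show "integrable lborel (\<lambda>y. indicator {0..x} y *\<^sub>R (f (x - y) * f y))"
    proof (rule Bochner_Integration.integrable_bound)
      note [measurable] = f(1)
      show "(\<lambda>y. indicator {0..x} y *\<^sub>R (f (x - y) * f y)) \<in> borel_measurable lborel"
        by measurable
      have "f (x - y) * f y \<le> B * B" for y
        using f(2,3) by (intro mult_mono) (auto intro: order_trans)
      then show "AE y in lborel. norm (indicator {0..x} y *\<^sub>R (f (x - y) * f y))
          \<le> norm (indicator {0..x} y * (B * B))"
        using f(2) by (intro AE_I2) (simp add: indicator_def abs_mult)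
    qed
    show "indicator {a..b} y * c \<le> indicator {0..x} y *\<^sub>R (f (x - y) * f y)" for y
      using c[of y] ab f(2)[of y] f(2)[of "x - y"] by (auto simp: indicator_def)
  qed
  finally show ?thesis unfolding set_lebesgue_integral_def .
qed

lemma prob_density_nonneg_normalize:
  fixes g :: "real \<Rightarrow> real"
  assumes "g \<in> borel_measurable lborel" "\<And>x. 0 \<le> g x" "\<And>x. x < 0 \<Longrightarrow> g x = 0"
    and "integrable lborel g" "integral\<^sup>L lborel g > 0"
  shows "prob_density_nonneg (\<lambda>x. g x / integral\<^sup>L lborel g)"
  using assms unfolding prob_density_nonneg_def by simp

lemma sqrt_diff_le:
  fixes x y :: real
  assumes "0 < x" "x \<le> y"
  shows "sqrt y - sqrt x \<le> (y - x) / (2 * sqrt x)"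
proof -
  have "(sqrt y - sqrt x) * (2 * sqrt x) \<le> (sqrt y - sqrt x) * (sqrt y + sqrt x)"
    using assms by (intro mult_left_mono) auto
  also have "\<dots> = y - x"
    using assms by (simp add: algebra_simps)
  finally show ?thesis
    using assms by (simp add: field_simps)
qed

lemma abs_sin_diff_le: "\<bar>sin b - sin a\<bar> \<le> \<bar>b - a\<bar>" for a b :: real
proof -
  have "\<bar>sin b - sin a\<bar> = 2 * \<bar>sin ((b - a) / 2)\<bar> * \<bar>cos ((b + a) / 2)\<bar>"
    by (simp add: sin_diff_sin abs_mult)
  also have "\<dots> \<le> 2 * \<bar>(b - a) / 2\<bar> * 1"
    by (intro mult_mono abs_sin_x_le_abs_x) auto
  finally show ?thesis by simp
qed

lemma exp_neg_sqrt_le: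
  fixes x :: real
  assumes "0 < x"
  shows "exp (- sqrt x) \<le> 256 * x powr (-2)"
proof -
  have "sqrt x / 4 \<le> exp (sqrt x / 4)"
    using exp_ge_add_one_self[of "sqrt x / 4"] by linarith
  have "(sqrt x ^ 2) ^ 2 / 256 = (sqrt x / 4) ^ 4"
    by (simp add: power_divide flip: power_mult)
  also have "\<dots> \<le> exp (sqrt x / 4) ^ 4"
    using \<open>sqrt x / 4 \<le> exp (sqrt x / 4)\<close> assms by (intro power_mono) auto
  also have "\<dots> = exp (sqrt x)"
    by (simp flip: exp_of_nat_mult)
  finally have "x\<^sup>2 / 256 \<le> exp (sqrt x)"
    using assms by simp
  then show ?thesis
    using assms by (simp add: exp_minus powr_minus field_simps)
qed

lemma integrable_indicator_powr_at_top:
  fixes a e :: real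
  assumes "e < -1" "0 < a"
  shows "integrable lborel (\<lambda>x. indicator {a..} x * x powr e)"
proof -
  have "(\<lambda>x. x powr e) integrable_on {a..}"
    using has_integral_powr_to_inf[OF assms] by blast
  then have "(\<lambda>x. x powr e) absolutely_integrable_on {a..}"
    by (rule nonnegative_absolutely_integrable_1) auto
  then have "integrable lebesgue (\<lambda>x. indicator {a..} x * x powr e)"
    unfolding set_integrable_def by simp
  then show ?thesis
    by (subst (asm) integrable_completion) measurable
qed

definition osc_exponent :: "real \<Rightarrow> real" where
  "osc_exponent x = sqrt x * (2 + sin (pi * log 2 x))"

definition osc_tail :: "real \<Rightarrow> real" where
  "osc_tail x = (if 1 \<le> x then exp (- osc_exponent x) else 0)"

definition osc_peak :: "nat \<Rightarrow> real" where
  "osc_peak k = 2 powr (2 * real k + 1/2)"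

lemma osc_exponent_bounds:
  assumes "0 \<le> x"
  shows "sqrt x \<le> osc_exponent x" "osc_exponent x \<le> 3 * sqrt x"
proof -
  have "1 \<le> 2 + sin (pi * log 2 x)" "2 + sin (pi * log 2 x) \<le> 3"
    using sin_ge_minus_one[of "pi * log 2 x"] sin_le_one[of "pi * log 2 x"] by linarith+
  from this[THEN mult_left_mono, of "sqrt x"] assms
  show "sqrt x \<le> osc_exponent x" "osc_exponent x \<le> 3 * sqrt x"
    unfolding osc_exponent_def by (simp_all add: mult.commute)
qed

lemma abs_sin_pi_log2_diff_le:
  fixes x y :: real
  assumes "0 < x" "x \<le> y"
  shows "\<bar>sin (pi * log 2 y) - sin (pi * log 2 x)\<bar> \<le> 8 * ((y - x) / x)"
proof -
  have "\<bar>sin (pi * log 2 y) - sin (pi * log 2 x)\<bar> \<le> \<bar>pi * log 2 y - pi * log 2 x\<bar>"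
    by (rule abs_sin_diff_le)
  also have "\<dots> = pi / ln 2 * ln (y / x)"
    using assms by (simp add: log_def ln_div field_simps)
  also have "\<dots> \<le> 8 * ((y - x) / x)"
  proof (rule mult_mono)
    show "pi / ln 2 \<le> 8"
      using pi_less_4 ln2_ge_two_thirds by (simp add: field_simps)
    show "ln (y / x) \<le> (y - x) / x"
      using assms ln_le_minus_one[of "y / x"] by (simp add: diff_divide_distrib)
  qed (use assms in auto)
  finally show ?thesis .
qed

lemma osc_exponent_increment:
  fixes x y :: real
  assumes "0 < x" "x \<le> y"
  shows "\<bar>osc_exponent y - osc_exponent x\<bar> \<le> (y - x) * (10 / sqrt x)"
proof -
  define a b where "a = pi * log 2 x" and "b = pi * log 2 y"
  have split: "osc_exponent y - osc_exponent x
      = (sqrt y - sqrt x) * (2 + sin b) + sqrt x * (sin b - sin a)"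
    unfolding osc_exponent_def a_def b_def by (simp add: algebra_simps)
  have "\<bar>2 + sin b\<bar> \<le> 3"
    using sin_le_one[of b] sin_ge_minus_one[of b] by linarith
  then have growth: "\<bar>(sqrt y - sqrt x) * (2 + sin b)\<bar> \<le> (y - x) / (2 * sqrt x) * 3"
    unfolding abs_mult using sqrt_diff_le[OF assms] assms by (intro mult_mono) auto
  have "\<bar>sqrt x * (sin b - sin a)\<bar> \<le> sqrt x * (8 * ((y - x) / x))"
    unfolding abs_mult a_def b_def using abs_sin_pi_log2_diff_le[OF assms] assms
    by (metis abs_of_nonneg less_imp_le mult_left_mono real_sqrt_ge_zero)
  also have "\<dots> = (y - x) * 8 * (sqrt x / x)"
    by simp
  also have "sqrt x / x = 1 / sqrt x"
    using assms by (simp add: sqrt_divide_self_eq inverse_eq_divide)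
  finally have oscillation: "\<bar>sqrt x * (sin b - sin a)\<bar> \<le> (y - x) * 8 * (1 / sqrt x)" .
  have "\<bar>osc_exponent y - osc_exponent x\<bar> \<le> (y - x) / (2 * sqrt x) * 3 + (y - x) * 8 * (1 / sqrt x)"
    unfolding split using growth oscillation
    using abs_triangle_ineq[of "(sqrt y - sqrt x) * (2 + sin b)" "sqrt x * (sin b - sin a)"]
    by linarith
  also have "\<dots> \<le> (y - x) * (10 / sqrt x)"
    using assms by (simp add: field_simps)
  finally show ?thesis .
qed

lemma abs_osc_exponent_diff_le:
  fixes x y :: real
  assumes "1 \<le> x" "1 \<le> y" "\<bar>y - x\<bar> \<le> 1"
  shows "\<bar>osc_exponent y - osc_exponent x\<bar> \<le> 10"
proof -
  have "\<bar>osc_exponent v - osc_exponent u\<bar> \<le> 10" if "1 \<le> u" "u \<le> v" "v - u \<le> 1" for u v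
  proof -
    have "\<bar>osc_exponent v - osc_exponent u\<bar> \<le> (v - u) * (10 / sqrt u)"
      using that by (intro osc_exponent_increment) auto
    also have "\<dots> \<le> 1 * (10 / 1)"
      using that by (intro mult_mono divide_left_mono) auto
    finally show ?thesis by simp
  qed
  from this[of x y] this[of y x] assms show ?thesis
    by (cases "x \<le> y") (auto simp: abs_minus_commute)
qed

lemma osc_exponent_shift: "((\<lambda>x. osc_exponent (x + t) - osc_exponent x) \<longlongrightarrow> 0) at_top"
proof (rule shift_difference_tendsto_zero)
  show "\<bar>osc_exponent y - osc_exponent x\<bar> \<le> (y - x) * (10 / sqrt x)" if "1 \<le> x" "x \<le> y" for x y
    using that by (intro osc_exponent_increment) auto
  show "((\<lambda>x. 10 / sqrt x) \<longlongrightarrow> 0) at_top"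
    by real_asymp
qed

lemma osc_exponent_two_powr:
  "osc_exponent (2 powr (2 * real k + s)) = sqrt (2 powr (2 * real k + s)) * (2 + sin (pi * s))"
proof -
  have "pi * log 2 (2 powr (2 * real k + s)) = pi * s + 2 * real k * pi"
    by (simp add: algebra_simps)
  then show ?thesis
    unfolding osc_exponent_def by (simp add: sin_add)
qed

lemma osc_exponent_at_peak:
  "osc_exponent (osc_peak k) = 3 * sqrt (osc_peak k)"
  "osc_exponent (osc_peak k / 2) = sqrt (osc_peak k / 2)"
  "osc_exponent (2 * osc_peak k) = sqrt (2 * osc_peak k)"
proof -
  have "2 powr (2 * real k + - 1/2) = 2 powr ((2 * real k + 1/2) - 1)"
    by simp
  then have half: "osc_peak k / 2 = 2 powr (2 * real k + - 1/2)"
    unfolding osc_peak_def by (subst (asm) powr_diff) simp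
  have "2 powr (2 * real k + 3/2) = 2 powr ((2 * real k + 1/2) + 1)"
    by (simp add: algebra_simps)
  then have double: "2 * osc_peak k = 2 powr (2 * real k + 3/2)"
    unfolding osc_peak_def by (subst (asm) powr_add) simp
  have "sin (pi * (3/2)) = -1"
    using sin_3over2_pi by (simp add: mult.commute)
  then show "osc_exponent (osc_peak k) = 3 * sqrt (osc_peak k)"
    "osc_exponent (osc_peak k / 2) = sqrt (osc_peak k / 2)"
    "osc_exponent (2 * osc_peak k) = sqrt (2 * osc_peak k)"
    unfolding half double unfolding osc_peak_def osc_exponent_two_powr by simp_all
qed

lemma filterlim_osc_peak: "filterlim osc_peak at_top sequentially"
  unfolding osc_peak_def by real_asymp

lemma osc_tail_measurable [measurable]: "osc_tail \<in> borel_measurable lborel"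
  unfolding osc_tail_def osc_exponent_def by measurable

lemma osc_tail_nonneg: "0 \<le> osc_tail x"
  by (simp add: osc_tail_def)

lemma osc_tail_le_one: "osc_tail x \<le> 1"
proof (cases "1 \<le> x")
  case True
  then have "0 \<le> osc_exponent x"
    using osc_exponent_bounds(1)[of x] real_sqrt_ge_zero[of x] by linarith
  then show ?thesis by (simp add: osc_tail_def)
qed (simp add: osc_tail_def)

lemma integrable_osc_tail: "integrable lborel osc_tail"
proof -
  have "integrable lborel (\<lambda>x::real. 256 * (indicator {1..} x * x powr (-2)))"
    by (intro integrable_mult_right integrable_indicator_powr_at_top) auto
  then show ?thesis
  proof (rule Bochner_Integration.integrable_bound)
    show "AE x in lborel. norm (osc_tail x) \<le> norm (256 * (indicator {1..} x * x powr (-2)))"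
    proof (intro AE_I2)
      fix x :: real
      show "norm (osc_tail x) \<le> norm (256 * (indicator {1..} x * x powr (-2)))"
      proof (cases "1 \<le> x")
        case True
        then have "osc_tail x \<le> exp (- sqrt x)"
          using osc_exponent_bounds(1)[of x] by (simp add: osc_tail_def)
        also have "\<dots> \<le> 256 * x powr (-2)"
          using True by (intro exp_neg_sqrt_le) auto
        finally show ?thesis
          using True osc_tail_nonneg[of x] by simp
      qed (simp add: osc_tail_def)
    qed
  qed simp
qed

lemma osc_tail_integral_pos: "0 < integral\<^sup>L lborel osc_tail"
proof -
  have "0 < integral\<^sup>L lborel (\<lambda>x. indicator {1..2::real} x * exp (-6::real))"
    by simp
  also have "\<dots> \<le> integral\<^sup>L lborel osc_tail"
  proof (rule integral_mono[OF _ integrable_osc_tail])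
    show "integrable lborel (\<lambda>x. indicator {1..2::real} x * exp (-6::real))"
      by (intro integrable_mult_left) simp
    show "indicator {1..2} x * exp (-6::real) \<le> osc_tail x" for x :: real
    proof (cases "x \<in> {1..2}")
      case True
      then have "osc_exponent x \<le> 3 * sqrt 4"
        using osc_exponent_bounds(2)[of x] real_sqrt_le_mono[of x 4] by auto
      then show ?thesis
        using True by (simp add: osc_tail_def)
    qed (simp add: osc_tail_nonneg)
  qed
  finally show ?thesis .
qed

lemma osc_tail_at_peak:
  assumes "1 \<le> osc_peak k"
  shows "osc_tail (osc_peak k) = exp (- 3 * sqrt (osc_peak k))"
    and "osc_tail (2 * osc_peak k) = exp (- sqrt (2 * osc_peak k))"
  using assms by (simp_all add: osc_tail_def osc_exponent_at_peak)

lemma osc_tail_ratio_at_peak: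
  assumes "1 \<le> osc_peak k"
  shows "exp (sqrt (osc_peak k)) \<le> osc_tail (2 * osc_peak k) / osc_tail (osc_peak k)"
proof -
  define p where "p = osc_peak k"
  have "sqrt (2 * p) \<le> sqrt (4 * p)"
    using assms by (simp add: p_def)
  also have "\<dots> = 2 * sqrt p"
    by (simp add: real_sqrt_mult)
  finally have "exp (sqrt p) \<le> exp (3 * sqrt p - sqrt (2 * p))"
    by simp
  also have "\<dots> = osc_tail (2 * p) / osc_tail p"
    using assms unfolding p_def osc_tail_at_peak[OF assms]
    by (simp add: exp_diff exp_minus field_simps)
  finally show ?thesis
    unfolding p_def .
qed

lemma osc_convolution_ratio_at_peak:
  fixes Z :: real
  assumes Z: "0 < Z" and peak: "4 \<le> osc_peak k"
  defines "p \<equiv> osc_peak k"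
  shows "exp (sqrt p - 20) / (2 * Z)
    \<le> (LINT y:{0..p}|lborel. (osc_tail (p - y) / Z) * (osc_tail y / Z)) / (2 * (osc_tail p / Z))"
proof -
  have peak_ge_1: "1 \<le> osc_peak k"
    using peak by simp
  have "exp (- 2 * sqrt (p / 2) - 20) / Z\<^sup>2 * (p / 2 - (p / 2 - 1))
    \<le> (LINT y:{0..p}|lborel. (osc_tail (p - y) / Z) * (osc_tail y / Z))"
  proof (rule convolution_ge_interval[where B = "1 / Z"])
    show "(\<lambda>x. osc_tail x / Z) \<in> borel_measurable lborel"
      by measurable
    show "0 \<le> osc_tail y / Z" "osc_tail y / Z \<le> 1 / Z" for y
      using Z osc_tail_nonneg[of y] osc_tail_le_one[of y] by (simp_all add: divide_right_mono)
    show "p / 2 - 1 \<le> p / 2" "{p / 2 - 1..p / 2} \<subseteq> {0..p}"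
      using peak by (auto simp: p_def)
    fix y assume y: "y \<in> {p / 2 - 1..p / 2}"
    have "osc_exponent u \<le> sqrt (p / 2) + 10" if "u \<in> {y, p - y}" for u
      using abs_osc_exponent_diff_le[of "p / 2" u] osc_exponent_at_peak(2)[of k] that y peak
      by (auto simp: p_def)
    from this[of y] this[of "p - y"]
    have "exp (- 2 * sqrt (p / 2) - 20) \<le> exp (- osc_exponent (p - y)) * exp (- osc_exponent y)"
      by (simp flip: exp_add)
    then show "exp (- 2 * sqrt (p / 2) - 20) / Z\<^sup>2 \<le> osc_tail (p - y) / Z * (osc_tail y / Z)"
      using y peak Z by (simp add: p_def osc_tail_def power2_eq_square divide_right_mono)
  qed
  then have conv: "exp (- 2 * sqrt (p / 2) - 20) / Z\<^sup>2
      \<le> (LINT y:{0..p}|lborel. (osc_tail (p - y) / Z) * (osc_tail y / Z))"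
    by simp
  have "sqrt (p / 2) \<le> sqrt p"
    using peak by (simp add: p_def)
  then have "exp (sqrt p - 20) / (2 * Z) \<le> exp (3 * sqrt p - 2 * sqrt (p / 2) - 20) / (2 * Z)"
    using Z by (simp add: divide_right_mono)
  also have "\<dots> = (exp (- 2 * sqrt (p / 2) - 20) / Z\<^sup>2) / (2 * (osc_tail p / Z))"
    using Z peak unfolding p_def osc_tail_at_peak(1)[OF peak_ge_1]
    by (simp add: exp_add exp_diff exp_minus power2_eq_square field_simps)
  also have "\<dots> \<le> (LINT y:{0..p}|lborel. (osc_tail (p - y) / Z) * (osc_tail y / Z)) / (2 * (osc_tail p / Z))"
    using conv Z osc_tail_nonneg[of p] by (intro divide_right_mono) simp_all
  finally show ?thesis .
qed

lemma eventually_osc_peak_ge: "\<forall>\<^sub>F k in sequentially. c \<le> osc_peak k"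
  using filterlim_osc_peak by (simp add: filterlim_at_top)

lemma long_tailed_osc_density:
  assumes "0 < Z"
  shows "long_tailed_density (\<lambda>x. osc_tail x / Z)"
proof (rule long_tailed_densityI_exp)
  show "0 < 1 / Z"
    using assms by simp
  show "\<forall>\<^sub>F x in at_top. osc_tail x / Z = 1 / Z * exp (- osc_exponent x)"
    using eventually_ge_at_top[of 1] by eventually_elim (simp add: osc_tail_def)
qed (rule osc_exponent_shift)

lemma not_almost_decreasing_osc_density:
  assumes "0 < Z"
  shows "\<not> almost_decreasing (\<lambda>x. osc_tail x / Z)"
proof (rule not_almost_decreasingI[OF sequentially_bot filterlim_osc_peak])
  show "\<forall>\<^sub>F k in sequentially. osc_peak k \<le> 2 * osc_peak k"
    using eventually_osc_peak_ge[of 0] by eventually_elim simp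
  have lim: "filterlim (\<lambda>k. exp (sqrt (osc_peak k))) at_top sequentially"
    by (rule filterlim_compose[OF _ filterlim_osc_peak]) real_asymp
  show "filterlim (\<lambda>k. (osc_tail (2 * osc_peak k) / Z) / (osc_tail (osc_peak k) / Z))
      at_top sequentially"
    using eventually_osc_peak_ge[of 1]
    by (rule filterlim_at_top_mono[OF lim eventually_mono]) (use assms osc_tail_ratio_at_peak in simp)
qed

lemma not_subexp_osc_density:
  assumes "0 < Z"
  shows "\<not> subexp_density (\<lambda>x. osc_tail x / Z)"
proof (rule not_subexp_densityI[OF sequentially_bot filterlim_osc_peak])
  have lim: "filterlim (\<lambda>k. exp (sqrt (osc_peak k) - 20) / (2 * Z)) at_top sequentially"
    by (rule filterlim_compose[OF _ filterlim_osc_peak]) (use assms in real_asymp)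
  show "filterlim (\<lambda>k. (LINT y:{0..osc_peak k}|lborel.
      (osc_tail (osc_peak k - y) / Z) * (osc_tail y / Z)) / (2 * (osc_tail (osc_peak k) / Z)))
      at_top sequentially"
    using eventually_osc_peak_ge[of 4]
    by (rule filterlim_at_top_mono[OF lim eventually_mono]) (rule osc_convolution_ratio_at_peak[OF assms])
qed

theorem proposition1p2:
  shows "\<exists>f :: real \<Rightarrow> real. prob_density_nonneg f \<and> long_tailed_density f \<and>
           \<not> subexp_density f \<and> \<not> almost_decreasing f"
proof -
  define Z where "Z = integral\<^sup>L lborel osc_tail"
  have Z: "0 < Z"
    unfolding Z_def by (rule osc_tail_integral_pos)
  have "prob_density_nonneg (\<lambda>x. osc_tail x / Z)"
    unfolding Z_def
  proof (rule prob_density_nonneg_normalize)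
    show "osc_tail x = 0" if "x < 0" for x
      using that by (simp add: osc_tail_def)
  qed (simp_all add: osc_tail_nonneg integrable_osc_tail osc_tail_integral_pos)
  with Z show ?thesis
    using long_tailed_osc_density not_subexp_osc_density not_almost_decreasing_osc_density
    by blast
qed

end
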